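(* Let $h=0$ and let $x$ be a piecewise constant functional order parameter as in the context, with $1-\lambda+\beta^2Q>0$ and $\beta^2\sigma^2(Q)\int_q^Qx(q')\,dq'<1$ for all $q\in[0,Q]$. Then for every $N$, $$\varphi_N(0;x)=\log\sigma(Q)+f(0,0;x),$$ where $f(\cdot,\cdot;x)$ is the solution of the Parisi equation $\partial_qf+\frac12\big(\partial_y^2f+x(q)(\partial_yf)^2\big)=0$ on $[0,Q]\times\mathbb R$ with final condition $f(Q,y)=\frac{\beta^2}{2}\sigma^2(Q)y^2$, i.e. $f(Q,y)=\frac{\beta^2}{2}\sigma^2(Q)y^2$ and, for $a=K,\dots,1$ and $q\in[q_{a-1},q_a]$, $$f(q,y)=\frac1{m_a}\log\mathbb E_g\exp\big(m_a f(q_a,y+\sqrt{q_a-q}\,g)\big)\quad(\text{resp. } f(q,y)=\mathbb E_g f(q_a,y+\sqrt{q_a-q}\,g)\text{ if } m_a=0),$$ with $g\sim\mathcal N(0,1)$.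
   Context: Fix $\beta>0$, $\lambda\in\mathbb R$, $h=0$. A piecewise constant functional order parameter $x$ is given by an integer $K\ge1$ and numbers $0=q_0\le q_1\le\dots\le q_K=Q$, $0\le m_1\le\dots\le m_K\le1$, with $x(q)=m_a$ for $q\in[q_{a-1},q_a)$. $\sigma(Q)=(1-\lambda+\beta^2Q)^{-1/2}$. Let $J_{ij}$ ($1\le i,j\le N$) and $J^a_i$ ($a=1,\dots,K$, $i=1,\dots,N$) be independent i.i.d. $\mathcal N(0,1)$; $\mathbb E_0$ is expectation over $J$, $\mathbb E_a$ over $(J^a_i)_i$. With $\mathbb E_z$ integration against the standard Gaussian measure on $\mathbb R^N$ and $C=-\beta^2Q$, for $t\in[0,1]$ $$\tilde Z_N(t;x)=\mathbb E_z\exp\Big(\beta\sqrt{\tfrac{t}{2N}}\sum_{i,j}J_{ij}z_iz_j-\tfrac{t\beta^2}{4N}\big(\textstyle\sum_iz_i^2\big)^2+\beta\sqrt{1-t}\sum_{a=1}^K\sqrt{q_a-q_{a-1}}\sum_iJ^a_iz_i+\tfrac{(1-t)C}{2}\sum_iz_i^2+\tfrac\lambda2\sum_iz_i^2\Big).$$ Set $Z_K=\tilde Z_N$, $Z_{a-1}=(\mathbb E_aZ_a^{m_a})^{1/m_a}$ for $a=K,\dots,1$ (with $Z_{a-1}=\exp\mathbb E_a\log Z_a$ if $m_a=0$), and $\varphi_N(t;x)=\frac1N\mathbb E_0\log Z_0$. *)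

theory Defs
  imports "HOL-Probability.Probability"
begin

definition gauss1 :: "real measure" where
  "gauss1 = density lborel std_normal_density"

definition gaussI :: "'i set \<Rightarrow> ('i \<Rightarrow> real) measure" where
  "gaussI I = PiM I (\<lambda>_. gauss1)"

definition xfun :: "nat \<Rightarrow> (nat \<Rightarrow> real) \<Rightarrow> (nat \<Rightarrow> real) \<Rightarrow> real \<Rightarrow> real" where
  "xfun K q m r =
     (if \<exists>a\<in>{1..K}. q (a-1) \<le> r \<and> r < q a
      then m (LEAST a. 1 \<le> a \<and> a \<le> K \<and> q (a-1) \<le> r \<and> r < q a) else 0)"

definition sigmaQ :: "real \<Rightarrow> real \<Rightarrow> real \<Rightarrow> real" where
  "sigmaQ beta lam Q = (1 - lam + beta^2 * Q) powr (-1/2)"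

text \<open>Interpolating partition function tilde Z_N(t;x), as a function of the disorder
  J0 (J_ij) and Js (Js a i = J^a_i).\<close>
definition Ztilde ::
  "real \<Rightarrow> real \<Rightarrow> nat \<Rightarrow> (nat \<Rightarrow> real) \<Rightarrow> nat \<Rightarrow> real \<Rightarrow>
   (nat \<times> nat \<Rightarrow> real) \<Rightarrow> (nat \<Rightarrow> nat \<Rightarrow> real) \<Rightarrow> real" where
  "Ztilde beta lam K q N t J0 Js =
    (integral\<^sup>L (gaussI {..<N}) (\<lambda>z.
       exp (beta * sqrt (t / (2 * real N)) * (\<Sum>i<N. \<Sum>j<N. J0 (i, j) * z i * z j)
            - t * beta^2 / (4 * real N) * (\<Sum>i<N. (z i)^2)^2
            + beta * sqrt (1 - t) * (\<Sum>a\<in>{1..K}. sqrt (q a - q (a-1)) * (\<Sum>i<N. Js a i * z i))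
            + (1 - t) * (- (beta^2 * q K)) / 2 * (\<Sum>i<N. (z i)^2)
            + lam / 2 * (\<Sum>i<N. (z i)^2))))"

definition Zstep ::
  "nat \<Rightarrow> nat \<Rightarrow> real \<Rightarrow> ((nat \<times> nat \<Rightarrow> real) \<Rightarrow> (nat \<Rightarrow> nat \<Rightarrow> real) \<Rightarrow> real)
   \<Rightarrow> (nat \<times> nat \<Rightarrow> real) \<Rightarrow> (nat \<Rightarrow> nat \<Rightarrow> real) \<Rightarrow> real" where
  "Zstep N a ma Z J0 Js =
    (if ma = 0 then exp (integral\<^sup>L (gaussI {..<N}) (\<lambda>g. ln (Z J0 (Js(a := g)))))
     else (integral\<^sup>L (gaussI {..<N}) (\<lambda>g. Z J0 (Js(a := g)) powr ma)) powr (1 / ma))"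

text \<open>Zlev n = Z_{K-n}.\<close>
primrec Zlev ::
  "real \<Rightarrow> real \<Rightarrow> nat \<Rightarrow> (nat \<Rightarrow> real) \<Rightarrow> (nat \<Rightarrow> real) \<Rightarrow> nat \<Rightarrow> real \<Rightarrow> nat
   \<Rightarrow> (nat \<times> nat \<Rightarrow> real) \<Rightarrow> (nat \<Rightarrow> nat \<Rightarrow> real) \<Rightarrow> real" where
  "Zlev beta lam K q m N t 0 = Ztilde beta lam K q N t"
| "Zlev beta lam K q m N t (Suc n) =
     Zstep N (K - n) (m (K - n)) (Zlev beta lam K q m N t n)"

definition phiN ::
  "real \<Rightarrow> real \<Rightarrow> nat \<Rightarrow> (nat \<Rightarrow> real) \<Rightarrow> (nat \<Rightarrow> real) \<Rightarrow> nat \<Rightarrow> real \<Rightarrow> real" where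
  "phiN beta lam K q m N t =
     (1 / real N) * (integral\<^sup>L (gaussI ({..<N} \<times> {..<N})) (\<lambda>J0.
        ln (Zlev beta lam K q m N t K J0 (\<lambda>_ _. 0))))"

definition fstep :: "real \<Rightarrow> real \<Rightarrow> (real \<Rightarrow> real) \<Rightarrow> real \<Rightarrow> real" where
  "fstep ma s h y =
    (if ma = 0 then (integral\<^sup>L gauss1 (\<lambda>g. h (y + sqrt s * g)))
     else 1 / ma * ln (integral\<^sup>L gauss1 (\<lambda>g. exp (ma * h (y + sqrt s * g)))))"

definition ffinal :: "real \<Rightarrow> real \<Rightarrow> real \<Rightarrow> real \<Rightarrow> real" where
  "ffinal beta lam Q y = beta^2 / 2 * (sigmaQ beta lam Q)^2 * y^2"

text \<open>fnode n = f(q_{K-n}, .).\<close>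
primrec fnode ::
  "real \<Rightarrow> real \<Rightarrow> nat \<Rightarrow> (nat \<Rightarrow> real) \<Rightarrow> (nat \<Rightarrow> real) \<Rightarrow> nat \<Rightarrow> real \<Rightarrow> real" where
  "fnode beta lam K q m 0 = ffinal beta lam (q K)"
| "fnode beta lam K q m (Suc n) =
     fstep (m (K - n)) (q (K - n) - q (K - n - 1)) (fnode beta lam K q m n)"

definition parisi_f ::
  "real \<Rightarrow> real \<Rightarrow> nat \<Rightarrow> (nat \<Rightarrow> real) \<Rightarrow> (nat \<Rightarrow> real) \<Rightarrow> real \<Rightarrow> real \<Rightarrow> real" where
  "parisi_f beta lam K q m r y =
    (if q K \<le> r then ffinal beta lam (q K) y
     else (let a = (LEAST a. 1 \<le> a \<and> a \<le> K \<and> q (a-1) \<le> r \<and> r < q a) in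
           fstep (m a) (q a - r) (fnode beta lam K q m (K - a)) y))"

end

theory Submission
  imports Defs
begin

(* At t = 0 the interpolating Hamiltonian carries no two-site coupling, so
   Z~_N(0) factorizes over the N sites into one-dimensional Gaussian integrals of
   exp(alpha z^2 + b z): each site contributes sigma(Q) exp(f(Q, Y_i)), where Y_i is the
   accumulated external field at site i and f(Q,.) is the quadratic final condition.
   Both the Parisi recursion for f and the recursion Z_{a-1} = (E_a Z_a^{m_a})^{1/m_a}
   preserve this picture: a quadratic profile c + y^2/(2B) is mapped by one Parisi step
   of length s with parameter m to another quadratic profile with B' = B - m s, and the
   Gaussian average E_a acts site by site.  The hypothesis
   beta^2 sigma(Q)^2 int_s^Q x < 1 says exactly that all the B's remain positive, so all
   Gaussian integrals converge.  Hence Z_0 = (sigma(Q) exp f(0,0))^N, whence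
   phi_N(0) = log sigma(Q) + f(0,0). *)

section \<open>Gaussian integrals on the real line\<close>

lemma prob_space_gauss1: "prob_space gauss1"
  unfolding gauss1_def by (rule prob_space_normal_density) simp

lemma sets_gauss1 [measurable_cong, simp]: "sets gauss1 = sets borel"
  unfolding gauss1_def by simp

text \<open>An integrable everywhere positive function has positive Gaussian mean; this makes the
  logarithms in the annealed Parisi step meaningful.\<close>
lemma gauss1_integral_pos:
  fixes f :: "real \<Rightarrow> real"
  assumes "integrable gauss1 f" and "\<And>x. f x > 0"
  shows "integral\<^sup>L gauss1 f > 0"
proof -
  interpret prob_space gauss1 by (rule prob_space_gauss1)
  have "integral\<^sup>L gauss1 (\<lambda>_. 0) < integral\<^sup>L gauss1 f"
    using assms by (intro integral_less_AE_space) (auto simp: emeasure_space_1)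
  then show ?thesis by simp
qed

lemma gauss1_exp_quadratic:
  fixes \<alpha> b :: real
  assumes "\<alpha> < 1/2"
  shows "has_bochner_integral gauss1 (\<lambda>g. exp (\<alpha> * g^2 + b * g))
           ((1 - 2*\<alpha>) powr (-1/2) * exp (b^2 / (2 * (1 - 2*\<alpha>))))"
proof -
  define d where "d = 1 - 2*\<alpha>"
  have d: "d > 0" using assms d_def by simp
  define \<mu> where "\<mu> = b / d"
  define s where "s = 1 / sqrt d"
  have dens: "normal_density \<mu> s g = sqrt d / sqrt (2*pi) * exp (- d * (g - \<mu>)^2 / 2)" for g
    using d unfolding normal_density_def s_def
    by (simp add: real_sqrt_divide power_divide field_simps real_sqrt_mult)
  have complete_square: "- (g^2)/2 + (\<alpha> * g^2 + b * g) = - d * (g - \<mu>)^2 / 2 + b^2/(2*d)" for g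
  proof -
    have \<alpha>: "\<alpha> = (1 - d)/2" using d_def by simp
    show ?thesis using d unfolding \<mu>_def \<alpha> by (simp add: field_simps power2_eq_square)
  qed
  have norm: "d powr (-1/2) * sqrt d = 1"
    using d by (simp add: powr_minus powr_half_sqrt[symmetric] field_simps)
  have tilt: "std_normal_density g * exp (\<alpha> * g^2 + b * g)
      = (d powr (-1/2) * exp (b^2 / (2 * d))) * normal_density \<mu> s g" for g
  proof -
    have "std_normal_density g * exp (\<alpha> * g^2 + b * g)
        = 1 / sqrt (2*pi) * exp (- d * (g - \<mu>)^2 / 2) * exp (b^2/(2*d))"
      unfolding std_normal_density_def mult.assoc exp_add[symmetric] complete_square[symmetric]
      by simp
    also have "\<dots> = (d powr (-1/2) * sqrt d) * (1 / sqrt (2*pi) * exp (- d * (g - \<mu>)^2 / 2) * exp (b^2/(2*d)))"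
      unfolding norm by simp
    also have "\<dots> = (d powr (-1/2) * exp (b^2 / (2 * d))) * normal_density \<mu> s g"
      unfolding dens by (simp add: field_simps)
    finally show ?thesis .
  qed
  have "s > 0" using d unfolding s_def by simp
  then have "has_bochner_integral lborel (normal_density \<mu> s) 1"
    by (simp add: has_bochner_integral_iff integrable_normal_density integral_normal_density)
  then have "has_bochner_integral lborel (\<lambda>g. (d powr (-1/2) * exp (b^2 / (2 * d))) * normal_density \<mu> s g)
        ((d powr (-1/2) * exp (b^2 / (2 * d))) * 1)"
    by (rule has_bochner_integral_mult_right)
  then have "has_bochner_integral lborel (\<lambda>g. std_normal_density g *\<^sub>R exp (\<alpha> * g^2 + b * g))
        (d powr (-1/2) * exp (b^2 / (2 * d)))"
    by (simp add: tilt)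
  then show ?thesis unfolding gauss1_def d_def
    by (intro has_bochner_integral_density) auto
qed

lemma gauss1_quadratic_poly:
  fixes c0 c1 c2 :: real
  shows "has_bochner_integral gauss1 (\<lambda>g. c0 + c1 * g + c2 * g^2) (c0 + c2)"
proof -
  have m0: "has_bochner_integral lborel (\<lambda>x. std_normal_density x * x^(2*0)) 1"
    using std_normal_moment_even[of 0] by simp
  have m1: "has_bochner_integral lborel (\<lambda>x. std_normal_density x * x^(2*0+1)) 0"
    using std_normal_moment_odd[of 0] by simp
  have m2: "has_bochner_integral lborel (\<lambda>x. std_normal_density x * x^(2*1)) 1"
    using std_normal_moment_even[of 1] by simp
  have "has_bochner_integral lborel (\<lambda>x. c0 * (std_normal_density x * x^(2*0))
      + c1 * (std_normal_density x * x^(2*0+1)) + c2 * (std_normal_density x * x^(2*1)))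
      (c0 * 1 + c1 * 0 + c2 * 1)"
    by (intro has_bochner_integral_add has_bochner_integral_mult_right m0 m1 m2)
  then have "has_bochner_integral lborel (\<lambda>x. std_normal_density x *\<^sub>R (c0 + c1 * x + c2 * x^2)) (c0 + c2)"
    by (simp add: algebra_simps power2_eq_square)
  then show ?thesis unfolding gauss1_def
    by (intro has_bochner_integral_density) auto
qed

section \<open>One Parisi step applied to a quadratic profile\<close>

text \<open>All Parisi nodes turn out to be quadratic profiles y \<mapsto> c + y^2/(2B) with B > 0.\<close>
definition quad_profile :: "real \<Rightarrow> real \<Rightarrow> real \<Rightarrow> real" where
  "quad_profile c B y = c + y^2 / (2*B)"

lemma gauss1_shift_quad_profile:
  fixes c B y s :: real
  assumes "s \<ge> 0"
  shows "has_bochner_integral gauss1 (\<lambda>g. quad_profile c B (y + sqrt s * g))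
           (quad_profile (c + s/(2*B)) B y)"
proof -
  have "has_bochner_integral gauss1
      (\<lambda>g. (c + y^2/(2*B)) + (y * sqrt s / B) * g + ((sqrt s)^2/(2*B)) * g^2)
      ((c + y^2/(2*B)) + (sqrt s)^2/(2*B))"
    by (rule gauss1_quadratic_poly)
  moreover have "(c + y^2/(2*B)) + (y * sqrt s / B) * g + ((sqrt s)^2/(2*B)) * g^2
      = quad_profile c B (y + sqrt s * g)" for g
    unfolding quad_profile_def by (simp add: power2_eq_square field_simps add_divide_distrib)
  ultimately show ?thesis
    using assms by (simp add: quad_profile_def algebra_simps)
qed

lemma gauss1_shift_exp_quad_profile:
  fixes c B y s m :: real
  assumes s: "s \<ge> 0" and B: "B > 0" and B': "B - m * s > 0"
  shows "has_bochner_integral gauss1 (\<lambda>g. exp (m * quad_profile c B (y + sqrt s * g)))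
     (exp (m * quad_profile c (B - m * s) y) * ((B - m * s)/B) powr (-1/2))"
proof -
  define \<alpha> where "\<alpha> = m * s / (2*B)"
  define b where "b = m * y * sqrt s / B"
  define k where "k = m * c + m * y^2 / (2*B)"
  have \<alpha>: "\<alpha> < 1/2" using B B' unfolding \<alpha>_def by (simp add: field_simps)
  have d: "1 - 2*\<alpha> = (B - m * s)/B" using B unfolding \<alpha>_def by (simp add: field_simps)
  have integrand: "exp k * exp (\<alpha> * g^2 + b * g) = exp (m * quad_profile c B (y + sqrt s * g))" for g
  proof -
    have "(y + sqrt s * g)^2 = y^2 + 2 * y * sqrt s * g + s * g^2"
      using s by (simp add: power2_eq_square algebra_simps)
    then have "k + (\<alpha> * g^2 + b * g) = m * quad_profile c B (y + sqrt s * g)"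
      using B unfolding k_def \<alpha>_def b_def quad_profile_def by (simp add: field_simps)
    then show ?thesis by (simp add: exp_add[symmetric])
  qed
  have exponent: "k + b^2 / (2 * (1 - 2*\<alpha>)) = m * quad_profile c (B - m * s) y"
  proof -
    have b2: "b^2 = m^2 * y^2 * s / B^2"
      unfolding b_def using s by (simp add: power_divide power_mult_distrib)
    show ?thesis unfolding b2 d k_def quad_profile_def using B B'
      by (simp add: power2_eq_square field_simps)
  qed
  have "has_bochner_integral gauss1 (\<lambda>g. exp k * exp (\<alpha> * g^2 + b * g))
     (exp k * ((1 - 2*\<alpha>) powr (-1/2) * exp (b^2 / (2 * (1 - 2*\<alpha>)))))"
    by (intro has_bochner_integral_mult_right gauss1_exp_quadratic \<alpha>)
  moreover have "exp k * ((1 - 2*\<alpha>) powr (-1/2) * exp (b^2 / (2 * (1 - 2*\<alpha>))))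
      = exp (m * quad_profile c (B - m * s) y) * ((B - m * s)/B) powr (-1/2)"
    unfolding exponent[symmetric] exp_add d by (simp add: mult_ac)
  ultimately show ?thesis by (simp add: integrand)
qed

definition quad_step_const :: "real \<Rightarrow> real \<Rightarrow> real \<Rightarrow> real \<Rightarrow> real" where
  "quad_step_const m s B c =
     (if m = 0 then c + s/(2*B) else c - ln ((B - m * s)/B) / (2*m))"

lemma fstep_quad_profile:
  fixes c B s m :: real
  assumes s: "s \<ge> 0" and B: "B > 0" and B': "B - m * s > 0"
  shows "fstep m s (quad_profile c B) = quad_profile (quad_step_const m s B c) (B - m * s)"
proof
  fix y
  show "fstep m s (quad_profile c B) y = quad_profile (quad_step_const m s B c) (B - m * s) y"
  proof (cases "m = 0")
    case True
    then show ?thesis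
      using has_bochner_integral_integral_eq[OF gauss1_shift_quad_profile[OF s, of c B y]]
      by (simp add: fstep_def quad_step_const_def)
  next
    case False
    define R where "R = (B - m * s)/B"
    have R: "R > 0" using B B' unfolding R_def by simp
    have I: "integral\<^sup>L gauss1 (\<lambda>g. exp (m * quad_profile c B (y + sqrt s * g)))
        = exp (m * quad_profile c (B - m * s) y) * R powr (-1/2)"
      unfolding R_def by (rule has_bochner_integral_integral_eq[OF gauss1_shift_exp_quad_profile[OF s B B']])
    have "ln (integral\<^sup>L gauss1 (\<lambda>g. exp (m * quad_profile c B (y + sqrt s * g))))
        = m * quad_profile c (B - m * s) y - ln R / 2"
      unfolding I using R by (simp add: ln_mult)
    then show ?thesis
      using False unfolding R_def fstep_def quad_step_const_def quad_profile_def
      by (simp add: field_simps)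
  qed
qed

lemma fstep_zero_length: "fstep m 0 h y = h y"
proof -
  interpret prob_space gauss1 by (rule prob_space_gauss1)
  show ?thesis unfolding fstep_def by (simp add: prob_space)
qed

section \<open>Gaussian integrals on R^I\<close>

lemma prob_space_gaussI: "prob_space (gaussI I)"
  unfolding gaussI_def by (rule prob_space_PiM) (rule prob_space_gauss1)

lemma gaussI_coordinate:
  fixes h :: "real \<Rightarrow> real"
  assumes "i \<in> I" and "has_bochner_integral gauss1 h v"
  shows "has_bochner_integral (gaussI I) (\<lambda>x. h (x i)) v"
proof -
  have h: "h \<in> borel_measurable gauss1"
    using assms(2) by (simp add: has_bochner_integral_iff borel_measurable_integrable)
  have proj: "(\<lambda>x. x i) \<in> measurable (gaussI I) gauss1"
    unfolding gaussI_def using measurable_component_singleton[OF assms(1), of "\<lambda>_. gauss1"] by simp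
  have "distr (gaussI I) gauss1 (\<lambda>x. x i) = gauss1"
    unfolding gaussI_def using distr_PiM_component[of I "\<lambda>_. gauss1" i] prob_space_gauss1 assms(1)
    by simp
  then have "has_bochner_integral (distr (gaussI I) gauss1 (\<lambda>x. x i)) h v" using assms(2) by simp
  then show ?thesis
    using proj h by (simp add: has_bochner_integral_iff integrable_distr_eq integral_distr)
qed

lemma gaussI_product:
  fixes f :: "'i \<Rightarrow> real \<Rightarrow> real"
  assumes "finite I" and "\<And>i. i \<in> I \<Longrightarrow> has_bochner_integral gauss1 (f i) (v i)"
  shows "integral\<^sup>L (gaussI I) (\<lambda>x. \<Prod>i\<in>I. f i (x i)) = (\<Prod>i\<in>I. v i)"
proof -
  interpret product_sigma_finite "\<lambda>_::'i. gauss1"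
    unfolding product_sigma_finite_def using prob_space_gauss1 prob_space_imp_sigma_finite by blast
  have "integral\<^sup>L (gaussI I) (\<lambda>x. \<Prod>i\<in>I. f i (x i)) = (\<Prod>i\<in>I. integral\<^sup>L gauss1 (f i))"
    unfolding gaussI_def
    by (rule product_integral_prod[OF assms(1)]) (use assms(2) in \<open>auto simp: has_bochner_integral_iff\<close>)
  also have "\<dots> = (\<Prod>i\<in>I. v i)"
    using assms(2) by (intro prod.cong) (auto simp: has_bochner_integral_iff)
  finally show ?thesis .
qed

section \<open>The recursion for Z acts site by site\<close>

lemma Zstep_sitewise_quenched:
  fixes Z :: "(nat \<times> nat \<Rightarrow> real) \<Rightarrow> (nat \<Rightarrow> nat \<Rightarrow> real) \<Rightarrow> real"
    and h Y :: "_ \<Rightarrow> real" and \<sigma> s :: real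
  assumes \<sigma>: "\<sigma> > 0"
    and Z: "\<And>g. Z J (Js(a := g)) = (\<Prod>i<N. \<sigma> * exp (h (Y i + sqrt s * g i)))"
    and int: "\<And>y. integrable gauss1 (\<lambda>g. h (y + sqrt s * g))"
  shows "Zstep N a 0 Z J Js = (\<Prod>i<N. \<sigma> * exp (fstep 0 s h (Y i)))"
proof -
  interpret prob_space gauss1 by (rule prob_space_gauss1)
  have site: "has_bochner_integral gauss1 (\<lambda>g. ln \<sigma> + h (y + sqrt s * g)) (ln \<sigma> + fstep 0 s h y)" for y
  proof -
    have "has_bochner_integral gauss1 (\<lambda>g. ln \<sigma> + h (y + sqrt s * g))
        (integral\<^sup>L gauss1 (\<lambda>_. ln \<sigma>) + integral\<^sup>L gauss1 (\<lambda>g. h (y + sqrt s * g)))"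
      by (intro has_bochner_integral_add has_bochner_integral_integrable int) simp
    then show ?thesis by (simp add: fstep_def prob_space)
  qed
  have "has_bochner_integral (gaussI {..<N}) (\<lambda>g. \<Sum>i<N. ln \<sigma> + h (Y i + sqrt s * g i))
      (\<Sum>i<N. ln \<sigma> + fstep 0 s h (Y i))"
    by (intro has_bochner_integral_sum gaussI_coordinate site) auto
  moreover have "ln (Z J (Js(a := g))) = (\<Sum>i<N. ln \<sigma> + h (Y i + sqrt s * g i))" for g
    unfolding Z using \<sigma> by (simp add: ln_prod ln_mult)
  ultimately have "Zstep N a 0 Z J Js = exp (\<Sum>i<N. ln \<sigma> + fstep 0 s h (Y i))"
    by (simp add: Zstep_def has_bochner_integral_integral_eq)
  then show ?thesis using \<sigma> by (simp add: exp_sum exp_add)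
qed

lemma Zstep_sitewise_annealed:
  fixes Z :: "(nat \<times> nat \<Rightarrow> real) \<Rightarrow> (nat \<Rightarrow> nat \<Rightarrow> real) \<Rightarrow> real"
    and h Y :: "_ \<Rightarrow> real" and \<sigma> s \<mu> :: real
  assumes \<sigma>: "\<sigma> > 0" and \<mu>: "\<mu> \<noteq> 0"
    and Z: "\<And>g. Z J (Js(a := g)) = (\<Prod>i<N. \<sigma> * exp (h (Y i + sqrt s * g i)))"
    and int: "\<And>y. integrable gauss1 (\<lambda>g. exp (\<mu> * h (y + sqrt s * g)))"
  shows "Zstep N a \<mu> Z J Js = (\<Prod>i<N. \<sigma> * exp (fstep \<mu> s h (Y i)))"
proof -
  define v where "v y = exp (\<mu> * (ln \<sigma> + fstep \<mu> s h y))" for y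
  have site: "has_bochner_integral gauss1 (\<lambda>g. \<sigma> powr \<mu> * exp (\<mu> * h (y + sqrt s * g))) (v y)" for y
  proof -
    have "integral\<^sup>L gauss1 (\<lambda>g. exp (\<mu> * h (y + sqrt s * g))) > 0"
      by (rule gauss1_integral_pos[OF int]) simp
    then have "exp (\<mu> * fstep \<mu> s h y) = integral\<^sup>L gauss1 (\<lambda>g. exp (\<mu> * h (y + sqrt s * g)))"
      using \<mu> by (simp add: fstep_def)
    then have "v y = \<sigma> powr \<mu> * integral\<^sup>L gauss1 (\<lambda>g. exp (\<mu> * h (y + sqrt s * g)))"
      unfolding v_def using \<sigma> by (simp add: distrib_left exp_add powr_def mult.commute)
    then show ?thesis
      by (simp add: has_bochner_integral_mult_right has_bochner_integral_integrable int)
  qed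
  have "Z J (Js(a := g)) powr \<mu> = (\<Prod>i<N. \<sigma> powr \<mu> * exp (\<mu> * h (Y i + sqrt s * g i)))" for g
    unfolding Z prod_powr_distrib powr_mult exp_powr_real by (simp add: mult.commute)
  then have "Zstep N a \<mu> Z J Js = (\<Prod>i<N. v (Y i)) powr (1 / \<mu>)"
    using \<mu> gaussI_product[of "{..<N}" "\<lambda>i g. \<sigma> powr \<mu> * exp (\<mu> * h (Y i + sqrt s * g))" "\<lambda>i. v (Y i)"]
    by (simp add: Zstep_def site)
  also have "\<dots> = (\<Prod>i<N. \<sigma> * exp (fstep \<mu> s h (Y i)))"
    unfolding prod_powr_distrib v_def exp_powr_real
    using \<mu> \<sigma> by (simp add: exp_add)
  finally show ?thesis .
qed

section \<open>The piecewise constant order parameter\<close>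

lemma q_mono:
  fixes q :: "nat \<Rightarrow> real"
  assumes "\<And>a. 1 \<le> a \<Longrightarrow> a \<le> K \<Longrightarrow> q (a-1) \<le> q a"
  shows "i \<le> j \<Longrightarrow> j \<le> K \<Longrightarrow> q i \<le> q j"
proof (induction j)
  case 0 then show ?case by simp
next
  case (Suc j)
  show ?case
  proof (cases "i = Suc j")
    case False
    then have "q i \<le> q j" using Suc by simp
    also have "q j \<le> q (Suc j)" using assms[of "Suc j"] Suc.prems by simp
    finally show ?thesis .
  qed simp
qed

lemma xfun_on:
  fixes q :: "nat \<Rightarrow> real"
  assumes mono: "\<And>a. 1 \<le> a \<Longrightarrow> a \<le> K \<Longrightarrow> q (a-1) \<le> q a"
    and a: "1 \<le> a" "a \<le> K" and r: "q (a-1) \<le> r" "r < q a"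
  shows "xfun K q m r = m a"
proof -
  have "(LEAST a. 1 \<le> a \<and> a \<le> K \<and> q (a-1) \<le> r \<and> r < q a) = a"
  proof (rule Least_equality)
    fix b assume b: "1 \<le> b \<and> b \<le> K \<and> q (b-1) \<le> r \<and> r < q b"
    show "a \<le> b"
    proof (rule ccontr)
      assume "\<not> a \<le> b"
      then have "q b \<le> q (a-1)" using q_mono[of K q, OF mono, of b "a-1"] a by simp
      then show False using b r by simp
    qed
  qed (use a r in simp)
  moreover have "\<exists>a\<in>{1..K}. q (a-1) \<le> r \<and> r < q a" using a r by auto
  ultimately show ?thesis unfolding xfun_def by simp
qed

lemma xfun_piece:
  fixes q :: "nat \<Rightarrow> real"
  assumes mono: "\<And>a. 1 \<le> a \<Longrightarrow> a \<le> K \<Longrightarrow> q (a-1) \<le> q a"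
    and a: "1 \<le> a" "a \<le> K"
  shows "(xfun K q m has_integral (m a * (q a - q (a-1)))) {q (a-1)..q a}"
proof -
  have "((\<lambda>x. m a) has_integral (m a * (q a - q (a-1)))) {q (a-1)..q a}"
    using has_integral_const_real[of "m a" "q (a-1)" "q a"] mono[OF a] by (simp add: mult.commute)
  then show ?thesis
    by (rule has_integral_spike_finite[of "{q a}", rotated 2])
       (use xfun_on[of K q, OF mono a] in auto)
qed

definition x_tail_mass :: "nat \<Rightarrow> (nat \<Rightarrow> real) \<Rightarrow> (nat \<Rightarrow> real) \<Rightarrow> nat \<Rightarrow> real" where
  "x_tail_mass K q m n = (\<Sum>j<n. m (K-j) * (q (K-j) - q (K-j-1)))"

lemma xfun_tail_integral:
  fixes q :: "nat \<Rightarrow> real"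
  assumes mono: "\<And>a. 1 \<le> a \<Longrightarrow> a \<le> K \<Longrightarrow> q (a-1) \<le> q a"
  shows "n \<le> K \<Longrightarrow> (xfun K q m has_integral x_tail_mass K q m n) {q (K-n)..q K}"
proof (induction n)
  case 0
  then show ?case unfolding x_tail_mass_def using has_integral_refl(2)[of "xfun K q m" "q K"] by simp
next
  case (Suc n)
  define a where "a = K - n"
  have a: "1 \<le> a" "a \<le> K" and e: "K - Suc n = a - 1" using Suc.prems a_def by auto
  have tail: "(xfun K q m has_integral x_tail_mass K q m n) {q a..q K}"
    using Suc a_def by simp
  have "(xfun K q m has_integral (m a * (q a - q (a-1)) + x_tail_mass K q m n)) {q (a-1)..q K}"
    by (rule has_integral_combine[OF _ _ xfun_piece[of K q, OF mono a] tail])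
       (use mono[OF a] q_mono[of K q, OF mono, of a K] a in auto)
  moreover have "x_tail_mass K q m (Suc n) = m a * (q a - q (a-1)) + x_tail_mass K q m n"
    unfolding x_tail_mass_def a_def by simp
  ultimately show ?case unfolding e by simp
qed

section \<open>The Parisi nodes are quadratic\<close>

lemma sigmaQ_sq:
  assumes "1 - lam + beta^2 * Q > 0"
  shows "(sigmaQ beta lam Q)^2 = 1 / (1 - lam + beta^2 * Q)"
proof -
  have "(sigmaQ beta lam Q)^2 = (1 - lam + beta^2 * Q) powr (-1/2 + -1/2)"
    unfolding sigmaQ_def power2_eq_square powr_add ..
  also have "\<dots> = 1 / (1 - lam + beta^2 * Q)"
    using assms by (simp add: powr_minus_divide)
  finally show ?thesis .
qed

text \<open>The denominator B_n of the quadratic profile f(q_{K-n}, .):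
  B_n = sigma(Q)^{-2} / beta^2 - int_{q_{K-n}}^Q x.\<close>
definition Bnode :: "real \<Rightarrow> real \<Rightarrow> nat \<Rightarrow> (nat \<Rightarrow> real) \<Rightarrow> (nat \<Rightarrow> real) \<Rightarrow> nat \<Rightarrow> real" where
  "Bnode beta lam K q m n = (1 - lam + beta^2 * q K) / beta^2 - x_tail_mass K q m n"

lemma Bnode_Suc:
  "n < K \<Longrightarrow> Bnode beta lam K q m (Suc n) = Bnode beta lam K q m n - m (K-n) * (q (K-n) - q (K-n-1))"
  unfolding Bnode_def x_tail_mass_def by simp

lemma Bnode_pos:
  fixes beta lam :: real and q m :: "nat \<Rightarrow> real"
  assumes beta: "beta > 0" and q0: "q 0 = 0"
    and mono: "\<And>a. 1 \<le> a \<Longrightarrow> a \<le> K \<Longrightarrow> q (a-1) \<le> q a"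
    and D: "1 - lam + beta^2 * q K > 0"
    and cond: "\<And>s. 0 \<le> s \<Longrightarrow> s \<le> q K \<Longrightarrow>
           beta^2 * (sigmaQ beta lam (q K))^2 * integral {s..q K} (xfun K q m) < 1"
    and n: "n \<le> K"
  shows "Bnode beta lam K q m n > 0"
proof -
  have "integral {q (K-n)..q K} (xfun K q m) = x_tail_mass K q m n"
    using xfun_tail_integral[where K=K and q=q and m=m and n=n, OF mono n] by (rule integral_unique)
  moreover have "0 \<le> q (K-n)" "q (K-n) \<le> q K"
    using q_mono[of K q, OF mono, of 0 "K-n"] q_mono[of K q, OF mono, of "K-n" K] q0 by auto
  ultimately have "beta^2 * (sigmaQ beta lam (q K))^2 * x_tail_mass K q m n < 1"
    using cond[of "q (K-n)"] by simp
  then have "beta^2 * x_tail_mass K q m n < 1 - lam + beta^2 * q K"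
    unfolding sigmaQ_sq[OF D] using D by (simp add: field_simps)
  then show ?thesis unfolding Bnode_def using beta by (simp add: field_simps)
qed

lemma fnode_quadratic:
  fixes beta lam :: real and q m :: "nat \<Rightarrow> real"
  assumes beta: "beta > 0" and D: "1 - lam + beta^2 * q K > 0"
    and mono: "\<And>a. 1 \<le> a \<Longrightarrow> a \<le> K \<Longrightarrow> q (a-1) \<le> q a"
    and Bpos: "\<And>n. n \<le> K \<Longrightarrow> Bnode beta lam K q m n > 0"
  shows "n \<le> K \<Longrightarrow> \<exists>c. fnode beta lam K q m n = quad_profile c (Bnode beta lam K q m n)"
proof (induction n)
  case 0
  have "ffinal beta lam (q K) y = y^2 / (2 * Bnode beta lam K q m 0)" for y
    unfolding ffinal_def Bnode_def x_tail_mass_def sigmaQ_sq[OF D]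
    using beta D by (simp add: field_simps)
  then have "fnode beta lam K q m 0 = quad_profile 0 (Bnode beta lam K q m 0)"
    by (simp add: fun_eq_iff quad_profile_def)
  then show ?case by blast
next
  case (Suc n)
  define a where "a = K - n"
  define s where "s = q a - q (a-1)"
  define B where "B = Bnode beta lam K q m n"
  have a: "1 \<le> a" "a \<le> K" using Suc.prems a_def by auto
  have s: "s \<ge> 0" using mono[OF a] s_def by simp
  have B'_eq: "Bnode beta lam K q m (Suc n) = B - m a * s"
    using Bnode_Suc[of n K] Suc.prems unfolding a_def s_def B_def by simp
  have B: "B > 0" and B': "B - m a * s > 0"
    using Bpos[of n] Bpos[of "Suc n"] Suc.prems unfolding B_def B'_eq by auto
  obtain c where c: "fnode beta lam K q m n = quad_profile c B"
    using Suc B_def by auto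
  have "fnode beta lam K q m (Suc n) = fstep (m a) s (quad_profile c B)"
    using c unfolding a_def s_def by simp
  also have "\<dots> = quad_profile (quad_step_const (m a) s B c) (Bnode beta lam K q m (Suc n))"
    unfolding B'_eq by (rule fstep_quad_profile[OF s B B'])
  finally show ?case by blast
qed

section \<open>Site factorization of the partition functions at t = 0\<close>

text \<open>The external field felt by site i from the first a levels:
  Y_i = sum_{b \<le> a} sqrt(q_b - q_{b-1}) J^b_i.\<close>
definition Ysum :: "(nat \<Rightarrow> real) \<Rightarrow> nat \<Rightarrow> (nat \<Rightarrow> nat \<Rightarrow> real) \<Rightarrow> nat \<Rightarrow> real" where
  "Ysum q a Js i = (\<Sum>b\<in>{1..a}. sqrt (q b - q (b-1)) * Js b i)"

lemma Ysum_upd: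
  assumes "1 \<le> a"
  shows "Ysum q a (Js(a := g)) i = Ysum q (a-1) Js i + sqrt (q a - q (a-1)) * g i"
proof -
  obtain a' where a': "a = Suc a'" using assms by (cases a) auto
  have "(\<Sum>b\<in>{1..a'}. sqrt (q b - q (b-1)) * (Js(a := g)) b i) = Ysum q (a-1) Js i"
    unfolding Ysum_def a' by (intro sum.cong) auto
  then show ?thesis unfolding Ysum_def a' by (simp add: sum.cl_ivl_Suc)
qed

lemma Ztilde_at_0_sitewise_integrand:
  fixes beta lam :: real and q :: "nat \<Rightarrow> real" and K :: nat
  defines "\<alpha> \<equiv> (lam - beta^2 * q K) / 2"
  shows "Ztilde beta lam K q N 0 J0 Js
     = integral\<^sup>L (gaussI {..<N}) (\<lambda>z. \<Prod>i<N. exp (\<alpha> * (z i)^2 + (beta * Ysum q K Js i) * z i))"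
proof -
  have field: "(\<Sum>i<N. Ysum q K Js i * z i) = (\<Sum>a\<in>{1..K}. sqrt (q a - q (a-1)) * (\<Sum>i<N. Js a i * z i))"
    for z :: "nat \<Rightarrow> real"
    unfolding Ysum_def by (simp add: sum_distrib_left sum_distrib_right mult_ac) (rule sum.swap)
  have "beta * (\<Sum>a\<in>{1..K}. sqrt (q a - q (a-1)) * (\<Sum>i<N. Js a i * z i))
        + (- (beta^2 * q K)) / 2 * (\<Sum>i<N. (z i)^2) + lam / 2 * (\<Sum>i<N. (z i)^2)
       = (\<Sum>i<N. \<alpha> * (z i)^2 + (beta * Ysum q K Js i) * z i)" for z :: "nat \<Rightarrow> real"
  proof -
    have "(\<Sum>i<N. \<alpha> * (z i)^2 + (beta * Ysum q K Js i) * z i)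
        = \<alpha> * (\<Sum>i<N. (z i)^2) + beta * (\<Sum>i<N. Ysum q K Js i * z i)"
      by (simp add: sum.distrib sum_distrib_left mult.assoc)
    moreover have "(- (beta^2 * q K)) / 2 * S + lam / 2 * S = \<alpha> * S" for S :: real
      by (simp add: \<alpha>_def field_simps)
    ultimately show ?thesis unfolding field by simp
  qed
  then have "exp (beta * sqrt (0 / (2 * real N)) * (\<Sum>i<N. \<Sum>j<N. J0 (i, j) * z i * z j)
            - 0 * beta^2 / (4 * real N) * (\<Sum>i<N. (z i)^2)^2
            + beta * sqrt (1 - 0) * (\<Sum>a\<in>{1..K}. sqrt (q a - q (a-1)) * (\<Sum>i<N. Js a i * z i))
            + (1 - 0) * (- (beta^2 * q K)) / 2 * (\<Sum>i<N. (z i)^2)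
            + lam / 2 * (\<Sum>i<N. (z i)^2))
        = (\<Prod>i<N. exp (\<alpha> * (z i)^2 + (beta * Ysum q K Js i) * z i))" for z :: "nat \<Rightarrow> real"
    by (simp add: exp_sum)
  then show ?thesis unfolding Ztilde_def by simp
qed

lemma Ztilde_at_0:
  fixes beta lam :: real and q :: "nat \<Rightarrow> real"
  assumes D: "1 - lam + beta^2 * q K > 0"
  shows "Ztilde beta lam K q N 0 J0 Js
     = (\<Prod>i<N. sigmaQ beta lam (q K) * exp (ffinal beta lam (q K) (Ysum q K Js i)))"
proof -
  define \<alpha> where "\<alpha> = (lam - beta^2 * q K) / 2"
  have \<alpha>: "\<alpha> < 1/2" and d: "1 - 2 * \<alpha> = 1 - lam + beta^2 * q K" using D \<alpha>_def by simp_all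
  have "Ztilde beta lam K q N 0 J0 Js
      = (\<Prod>i<N. (1 - 2*\<alpha>) powr (-1/2) * exp ((beta * Ysum q K Js i)^2 / (2 * (1 - 2*\<alpha>))))"
    unfolding Ztilde_at_0_sitewise_integrand \<alpha>_def[symmetric]
    by (rule gaussI_product, simp, rule gauss1_exp_quadratic[OF \<alpha>])
  also have "\<dots> = (\<Prod>i<N. sigmaQ beta lam (q K) * exp (ffinal beta lam (q K) (Ysum q K Js i)))"
  proof (intro prod.cong refl)
    fix i
    have "(beta * Ysum q K Js i)^2 / (2 * (1 - 2*\<alpha>)) = ffinal beta lam (q K) (Ysum q K Js i)"
      unfolding ffinal_def sigmaQ_sq[OF D] d using D by (simp add: power_mult_distrib)
    then show "(1 - 2*\<alpha>) powr (-1/2) * exp ((beta * Ysum q K Js i)^2 / (2 * (1 - 2*\<alpha>)))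
        = sigmaQ beta lam (q K) * exp (ffinal beta lam (q K) (Ysum q K Js i))"
      unfolding d sigmaQ_def by simp
  qed
  finally show ?thesis .
qed

lemma Zlev_sitewise:
  fixes beta lam :: real and q m :: "nat \<Rightarrow> real"
  assumes beta: "beta > 0" and D: "1 - lam + beta^2 * q K > 0"
    and mono: "\<And>a. 1 \<le> a \<Longrightarrow> a \<le> K \<Longrightarrow> q (a-1) \<le> q a"
    and Bpos: "\<And>n. n \<le> K \<Longrightarrow> Bnode beta lam K q m n > 0"
  shows "n \<le> K \<Longrightarrow> Zlev beta lam K q m N 0 n J0 Js
     = (\<Prod>i<N. sigmaQ beta lam (q K) * exp (fnode beta lam K q m n (Ysum q (K-n) Js i)))"
proof (induction n arbitrary: Js)
  case 0
  show ?case using Ztilde_at_0[where q=q and K=K, OF D] by simp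
next
  case (Suc n)
  define \<sigma> where "\<sigma> = sigmaQ beta lam (q K)"
  define a where "a = K - n"
  define s where "s = q a - q (a-1)"
  define B where "B = Bnode beta lam K q m n"
  have \<sigma>: "\<sigma> > 0" unfolding \<sigma>_def sigmaQ_def using D by simp
  have a: "1 \<le> a" "a \<le> K" and Ka: "K - Suc n = a - 1" using Suc.prems a_def by auto
  have s: "s \<ge> 0" using mono[OF a] s_def by simp
  have B: "B > 0" and B': "B - m a * s > 0"
    using Bpos[of n] Bpos[of "Suc n"] Bnode_Suc[of n K] Suc.prems
    unfolding a_def s_def B_def by auto
  obtain c where c: "fnode beta lam K q m n = quad_profile c B"
    using fnode_quadratic[OF beta D mono Bpos, of n] Suc.prems B_def by auto
  have Zs: "Zlev beta lam K q m N 0 (Suc n) J0 Js = Zstep N a (m a) (Zlev beta lam K q m N 0 n) J0 Js"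
    and fS: "fnode beta lam K q m (Suc n) = fstep (m a) s (quad_profile c B)"
    using c unfolding a_def s_def by simp_all
  have Z: "Zlev beta lam K q m N 0 n J0 (Js(a := g))
      = (\<Prod>i<N. \<sigma> * exp (quad_profile c B (Ysum q (a-1) Js i + sqrt s * g i)))" for g
    using Suc.IH Suc.prems unfolding \<sigma>_def s_def
    by (simp add: c a_def[symmetric] Ysum_upd[OF a(1)])
  show ?case
  proof (cases "m a = 0")
    case True
    have int: "integrable gauss1 (\<lambda>g. quad_profile c B (y + sqrt s * g))" for y
      using gauss1_shift_quad_profile[OF s] by (auto simp: has_bochner_integral_iff)
    show ?thesis
      unfolding Zs fS Ka \<sigma>_def[symmetric] True
      by (rule Zstep_sitewise_quenched[OF \<sigma>]) (rule Z, rule int)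
  next
    case False
    have int: "integrable gauss1 (\<lambda>g. exp (m a * quad_profile c B (y + sqrt s * g)))" for y
      using gauss1_shift_exp_quad_profile[OF s B B'] by (auto simp: has_bochner_integral_iff)
    show ?thesis
      unfolding Zs fS Ka \<sigma>_def[symmetric]
      by (rule Zstep_sitewise_annealed[OF \<sigma> False]) (rule Z, rule int)
  qed
qed

section \<open>The Parisi solution at q = 0\<close>

lemma fnode_zero_prefix:
  fixes q :: "nat \<Rightarrow> real"
  assumes "\<And>j. j \<le> p \<Longrightarrow> q j = 0" and "p \<le> K"
  shows "fnode beta lam K q m (K - p) = fnode beta lam K q m K"
  using assms
proof (induction p)
  case (Suc p)
  have "K - p = Suc (K - Suc p)" and "K - (K - Suc p) = Suc p" using Suc.prems by auto
  then have "fnode beta lam K q m (K - p) = fnode beta lam K q m (K - Suc p)"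
    using Suc.prems by (simp add: fstep_zero_length[abs_def])
  then show ?case using Suc by simp
qed simp

lemma q_zero_upto:
  fixes q :: "nat \<Rightarrow> real"
  assumes q0: "q 0 = 0" and mono: "\<And>a. 1 \<le> a \<Longrightarrow> a \<le> K \<Longrightarrow> q (a-1) \<le> q a"
    and k: "k \<le> K" "q k \<le> 0" and j: "j \<le> k"
  shows "q j = 0"
  using q_mono[of K q, OF mono, of 0 j] q_mono[of K q, OF mono, of j k] q0 k j by simp

lemma level_at_origin:
  fixes q :: "nat \<Rightarrow> real"
  assumes q0: "q 0 = 0" and Q: "0 < q K"
  shows "\<exists>a. 1 \<le> a \<and> a \<le> K \<and> q (a-1) \<le> 0 \<and> 0 < q a"
proof -
  define a where "a = (LEAST j. q j > 0)"
  have qa: "q a > 0" and aK: "a \<le> K"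
    using LeastI[of "\<lambda>j. q j > 0" K] Least_le[of "\<lambda>j. q j > 0" K] Q unfolding a_def by auto
  moreover have a1: "1 \<le> a" using qa q0 by (cases a) auto
  moreover have "\<not> q (a-1) > 0"
    using not_less_Least[of "a-1" "\<lambda>j. q j > 0"] a1 unfolding a_def by auto
  ultimately show ?thesis by (intro exI[of _ a]) simp
qed

text \<open>f(0, .) is the last Parisi node f(q_0, .): levels of zero length do not contribute.\<close>
lemma parisi_f_origin:
  fixes q :: "nat \<Rightarrow> real"
  assumes q0: "q 0 = 0" and mono: "\<And>a. 1 \<le> a \<Longrightarrow> a \<le> K \<Longrightarrow> q (a-1) \<le> q a"
  shows "parisi_f beta lam K q m 0 y = fnode beta lam K q m K y"
proof (cases "q K \<le> 0")
  case True
  have "fnode beta lam K q m (K - K) = fnode beta lam K q m K"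
    using q_zero_upto[where q=q and K=K, OF q0 mono _ True] by (intro fnode_zero_prefix) auto
  then show ?thesis unfolding parisi_f_def using True by simp
next
  case False
  define a where "a = (LEAST a. 1 \<le> a \<and> a \<le> K \<and> q (a-1) \<le> 0 \<and> 0 < q a)"
  have a: "1 \<le> a" "a \<le> K" "q (a-1) \<le> 0"
    using LeastI_ex[OF level_at_origin[where q=q and K=K, OF q0]] False unfolding a_def by auto
  have qa: "q (a-1) = 0"
    using q_zero_upto[where q=q and K=K, OF q0 mono _ a(3)] a by simp
  have "fnode beta lam K q m (K - (a-1)) = fnode beta lam K q m K"
    using q_zero_upto[where q=q and K=K, OF q0 mono _ a(3)] a by (intro fnode_zero_prefix) auto
  moreover have "K - (a-1) = Suc (K - a)" and "K - (K - a) = a" using a by auto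
  ultimately have "fnode beta lam K q m K = fstep (m a) (q a - q (a-1)) (fnode beta lam K q m (K - a))"
    by (metis fnode.simps(2))
  then show ?thesis unfolding parisi_f_def a_def[symmetric] using False qa by (simp add: Let_def)
qed

theorem mainTheorem14:
  fixes beta lam :: real and K N :: nat and q m :: "nat \<Rightarrow> real"
  assumes "beta > 0"
    and "K \<ge> 1"
    and "q 0 = 0"
    and "\<And>a. 1 \<le> a \<Longrightarrow> a \<le> K \<Longrightarrow> q (a-1) \<le> q a"
    and "0 \<le> m 1"
    and "\<And>a. 1 \<le> a \<Longrightarrow> a < K \<Longrightarrow> m a \<le> m (Suc a)"
    and "m K \<le> 1"
    and "1 - lam + beta^2 * q K > 0"
    and "\<And>s. 0 \<le> s \<Longrightarrow> s \<le> q K \<Longrightarrow>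
           beta^2 * (sigmaQ beta lam (q K))^2 * integral {s..q K} (xfun K q m) < 1"
    and "N \<ge> 1"
  shows "phiN beta lam K q m N 0 = ln (sigmaQ beta lam (q K)) + parisi_f beta lam K q m 0 0"
proof -
  note beta = assms(1) and q0 = assms(3) and mono = assms(4) and D = assms(8)
  define \<sigma> where "\<sigma> = sigmaQ beta lam (q K)"
  have \<sigma>: "\<sigma> > 0" unfolding \<sigma>_def sigmaQ_def using D by simp
  have Bpos: "\<And>n. n \<le> K \<Longrightarrow> Bnode beta lam K q m n > 0"
    using Bnode_pos[OF beta q0 mono D assms(9)] by blast
  text \<open>Z_0 does not depend on the disorder J.\<close>
  have Z0: "Zlev beta lam K q m N 0 K J0 (\<lambda>_ _. 0) = (\<sigma> * exp (fnode beta lam K q m K 0))^N" for J0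
    using Zlev_sitewise[OF beta D mono Bpos, of K N] unfolding \<sigma>_def by (simp add: Ysum_def)
  interpret prob_space "gaussI ({..<N} \<times> {..<N})" by (rule prob_space_gaussI)
  have "ln ((\<sigma> * exp (fnode beta lam K q m K 0))^N) = real N * (ln \<sigma> + fnode beta lam K q m K 0)"
    using \<sigma> by (simp add: ln_realpow ln_mult)
  then have "phiN beta lam K q m N 0 = ln \<sigma> + fnode beta lam K q m K 0"
    unfolding phiN_def Z0 using assms(10) by (simp add: prob_space)
  moreover have "parisi_f beta lam K q m 0 0 = fnode beta lam K q m K 0"
    by (rule parisi_f_origin[OF q0 mono])
  ultimately show ?thesis unfolding \<sigma>_def by simp
qed

end
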